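(* Let $n\ge 2$ and let $H_1,\dots,H_n$ be $1$-dimensional linear subspaces (lines through the origin) of $\mathbb{R}^n$ such that (i) at least two of them form an angle that is an irrational multiple of $\pi$; (ii) $H_1+\cdots+H_n=\mathbb{R}^n$; (iii) $\{H_1,\dots,H_n\}$ cannot be partitioned into two nonempty subsets such that every line in the first subset is orthogonal to every line in the second. If $E\subset S^{n-1}$ is nonempty, closed, and satisfies $R_{H_j}E=E$ for $j=1,\dots,n$, then $E=S^{n-1}$.
   Context: For a linear subspace $H$ of $\mathbb{R}^n$, $R_H$ denotes the reflection in $H$, i.e., the map $x\mapsto 2(x|H)-x$, where $x|H$ is the orthogonal projection of $x$ onto $H$. $+$ denotes Minkowski (vector) sum. $S^{n-1}$ is the unit sphere. *)

theory Defs
  imports "HOL-Analysis.Analysis"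
begin

definition orth_proj :: "('a::euclidean_space) set \<Rightarrow> 'a \<Rightarrow> 'a" where
  "orth_proj H x = closest_point H x"

definition reflection :: "('a::euclidean_space) set \<Rightarrow> 'a \<Rightarrow> 'a" where
  "reflection H x = 2 *\<^sub>R orth_proj H x - x"

definition line_angle :: "('a::euclidean_space) \<Rightarrow> 'a \<Rightarrow> real" where
  "line_angle u v = arccos (\<bar>u \<bullet> v\<bar> / (norm u * norm v))"

end

theory Submission
  imports Defs
begin

text \<open>Call E saturated for a subspace L if, together with each point x, it contains the whole
  slice of the unit sphere by x + L. The composition of the reflections in two lines at angle
  \<theta> is the rotation by 2\<theta> of their plane; when \<theta>/\<pi> is irrational its powers are dense in
  the rotation group of the plane, so a closed invariant E is saturated for that plane.
  Saturation for two subspaces with a common nonzero vector m passes to their sum: maximising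
  \<langle>-, y\<rangle> over the compact slice of E through x gives a point whose components in both
  subspaces are aligned with those of y, which forces it to be y; points y orthogonal to m
  are limits of such points. If E is saturated for L, dim L \<ge> 2 and the line of w is not
  orthogonal to L, then the mirror image of L in that line is saturated as well, meets L in a
  nonzero vector orthogonal to w, and its sum with L contains w. Indecomposability lets this
  absorb every line H j, and since these lines span \<real>^n, E is the whole sphere.\<close>

section \<open>Saturated subsets of the sphere and reflections in lines\<close>

definition line_reflection :: "'a::real_inner \<Rightarrow> 'a \<Rightarrow> 'a" where
  "line_reflection u x = (2 * (x \<bullet> u)) *\<^sub>R u - x"

definition sphere_saturated :: "'a::real_normed_vector set \<Rightarrow> 'a set \<Rightarrow> bool" where
  "sphere_saturated E L \<longleftrightarrow> (\<forall>x\<in>E. \<forall>y. norm y = 1 \<longrightarrow> y - x \<in> L \<longrightarrow> y \<in> E)"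

lemma sphere_saturated_mono: "sphere_saturated E L \<Longrightarrow> L' \<subseteq> L \<Longrightarrow> sphere_saturated E L'"
  unfolding sphere_saturated_def by blast

lemma sphere_saturated_UNIV:
  assumes "sphere_saturated E UNIV" "E \<noteq> {}" "E \<subseteq> sphere 0 1"
  shows "E = sphere 0 1"
proof -
  obtain x where "x \<in> E"
    using assms(2) by blast
  then have "sphere 0 1 \<subseteq> E"
    using assms(1) unfolding sphere_saturated_def by auto
  with assms(3) show ?thesis
    by blast
qed

lemma sphere_saturated_image:
  fixes g :: "'a::euclidean_space \<Rightarrow> 'a"
  assumes "orthogonal_transformation g" "g ` E = E" "sphere_saturated E L"
  shows "sphere_saturated E (g ` L)"
  unfolding sphere_saturated_def
proof (intro ballI allI impI)
  fix x y
  assume "x \<in> E" "norm y = 1" "y - x \<in> g ` L"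
  then obtain l x' y' where "l \<in> L" "y - x = g l" "x' \<in> E" "x = g x'" "y = g y'"
    using assms(2) orthogonal_transformation_surj[OF assms(1)] by (metis image_iff surjD)
  then have "g (y' - x') = g l"
    using orthogonal_transformation_linear[OF assms(1)] by (simp add: linear_diff)
  then have "y' - x' \<in> L"
    using orthogonal_transformation_inj[OF assms(1)] \<open>l \<in> L\<close> by (metis injD)
  moreover have "norm y' = 1"
    using \<open>norm y = 1\<close> \<open>y = g y'\<close> assms(1) by (simp add: orthogonal_transformation)
  ultimately have "y' \<in> E"
    using assms(3) \<open>x' \<in> E\<close> unfolding sphere_saturated_def by blast
  then show "y \<in> E"
    using assms(2) \<open>y = g y'\<close> by blast
qed

lemma orthogonal_transformation_line_reflection:
  assumes "norm u = 1"
  shows "orthogonal_transformation (line_reflection u)"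
  unfolding orthogonal_transformation
proof
  show "linear (line_reflection u)"
    by (rule linearI) (simp_all add: line_reflection_def inner_add_left algebra_simps)
  show "\<forall>v. norm (line_reflection u v) = norm v"
    using assms
    by (simp add: norm_eq_sqrt_inner line_reflection_def inner_diff_left inner_diff_right inner_commute
        power2_norm_eq_inner algebra_simps)
qed

lemma reflection_span_singleton:
  fixes u :: "'a::euclidean_space"
  assumes "norm u = 1"
  shows "reflection (span {u}) = line_reflection u"
proof
  fix x
  have "(x \<bullet> u) *\<^sub>R u = closest_point (span {u}) x"
  proof (rule closest_point_unique)
    show "\<forall>z\<in>span {u}. dist x ((x \<bullet> u) *\<^sub>R u) \<le> dist x z"
    proof
      fix z
      assume "z \<in> span {u}"
      then obtain k where z: "z = k *\<^sub>R u"
        by (auto simp: span_singleton)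
      have "u \<bullet> u = 1"
        using assms by (simp add: norm_eq_1)
      then have "(x - z) \<bullet> (x - z) = (x - (x \<bullet> u) *\<^sub>R u) \<bullet> (x - (x \<bullet> u) *\<^sub>R u) + (k - x \<bullet> u)\<^sup>2"
        by (simp add: z inner_diff_left inner_diff_right inner_commute power2_eq_square algebra_simps)
      then show "dist x ((x \<bullet> u) *\<^sub>R u) \<le> dist x z"
        by (simp add: dist_norm norm_le)
    qed
  qed (auto simp: subspace_imp_convex closed_subspace span_base span_scale)
  then show "reflection (span {u}) x = line_reflection u x"
    by (simp add: reflection_def orth_proj_def line_reflection_def flip: scaleR_scaleR)
qed

lemma subspace_dim_1_eq_span_unit:
  fixes S :: "'a::euclidean_space set"
  assumes "subspace S" "dim S = 1"
  obtains u where "norm u = 1" "S = span {u}"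
proof -
  obtain B where "B \<subseteq> S" "independent B" "S \<subseteq> span B" "card B = 1"
    using basis_exists[of S] assms(2) by metis
  then obtain b where "B = {b}" "b \<noteq> 0"
    by (metis card_1_singletonE dependent_zero insertI1)
  then have "S = span {b}"
    using \<open>B \<subseteq> S\<close> \<open>S \<subseteq> span B\<close> assms(1) span_minimal by blast
  also have "\<dots> = span {b /\<^sub>R norm b}"
  proof -
    have "b \<in> span {b /\<^sub>R norm b}"
      using span_scale[OF span_base, of "b /\<^sub>R norm b" _ "norm b"] \<open>b \<noteq> 0\<close> by simp
    moreover have "b /\<^sub>R norm b \<in> span {b}"
      by (simp add: span_base span_scale)
    ultimately show ?thesis
      by (simp add: span_eq)
  qed
  finally show ?thesis
    using \<open>b \<noteq> 0\<close> by (intro that[of "b /\<^sub>R norm b"]) auto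
qed

lemma orthogonal_span_singletons:
  "(\<forall>x\<in>span {a}. \<forall>y\<in>span {b}. orthogonal x y) \<longleftrightarrow> orthogonal a b"
  by (auto simp: span_singleton orthogonal_def span_base)

lemma dim_unit_pair:
  fixes a b :: "'a::euclidean_space"
  assumes "norm a = 1" "norm b = 1" "\<bar>a \<bullet> b\<bar> \<noteq> 1"
  shows "dim {a, b} = 2"
proof -
  have "a \<notin> span {b}"
  proof
    assume "a \<in> span {b}"
    then obtain k where "a = k *\<^sub>R b"
      by (auto simp: span_singleton)
    moreover have "b \<bullet> b = 1"
      using assms(2) by (simp add: norm_eq_1)
    ultimately show False
      using assms by simp
  qed
  moreover have "b \<notin> span {}"
    using assms(2) by auto
  ultimately show ?thesis
    by (simp add: dim_insert)
qed

lemma irrational_arccos_inner_of_line_angle: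
  fixes a b u v :: "'a::euclidean_space"
  assumes "norm a = 1" "norm b = 1" "u \<in> span {a}" "v \<in> span {b}" "u \<noteq> 0" "v \<noteq> 0"
    and irrational: "line_angle u v / pi \<notin> \<rat>"
  shows "arccos (a \<bullet> b) / pi \<notin> \<rat>"
proof -
  obtain s t where "u = s *\<^sub>R a" "v = t *\<^sub>R b"
    using assms(3,4) by (auto simp: span_singleton)
  with assms have angle: "line_angle u v = arccos \<bar>a \<bullet> b\<bar>"
    by (simp add: line_angle_def abs_mult)
  show ?thesis
  proof (cases "a \<bullet> b \<ge> 0")
    case True
    with irrational angle show ?thesis
      by simp
  next
    case False
    have "\<bar>a \<bullet> b\<bar> \<le> 1"
      using Cauchy_Schwarz_ineq2[of a b] assms(1,2) by simp
    with False have "arccos (a \<bullet> b) / pi = 1 - line_angle u v / pi"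
      using arccos_minus[of "\<bar>a \<bullet> b\<bar>"] by (simp add: angle diff_divide_distrib)
    with irrational show ?thesis
      using Rats_diff[OF Rats_1, of "arccos (a \<bullet> b) / pi"] by auto
  qed
qed

section \<open>Rotations of a plane\<close>

locale orthonormal_pair =
  fixes e1 e2 :: "'a::euclidean_space"
  assumes norm_e1: "e1 \<bullet> e1 = 1" and norm_e2: "e2 \<bullet> e2 = 1" and orth_e12: "e1 \<bullet> e2 = 0"
begin

text \<open>The plane span {e1, e2} is identified with the complex numbers, so that its rotations
  (extended by the identity on the orthogonal complement) are multiplications by cis t.\<close>

definition plane_coord :: "'a \<Rightarrow> complex" where
  "plane_coord x = Complex (x \<bullet> e1) (x \<bullet> e2)"

definition plane_point :: "complex \<Rightarrow> 'a" where
  "plane_point z = Re z *\<^sub>R e1 + Im z *\<^sub>R e2"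

definition plane_rotation :: "real \<Rightarrow> 'a \<Rightarrow> 'a" where
  "plane_rotation t x = x + plane_point ((cis t - 1) * plane_coord x)"

lemma orth_e21: "e2 \<bullet> e1 = 0"
  using orth_e12 by (simp add: inner_commute)

lemma linear_plane_coord: "linear plane_coord"
  by (rule linearI) (simp_all add: plane_coord_def inner_add_left complex_eq_iff)

lemma linear_plane_point: "linear plane_point"
  by (rule linearI) (simp_all add: plane_point_def algebra_simps)

lemma plane_coord_point [simp]: "plane_coord (plane_point z) = z"
  by (simp add: plane_coord_def plane_point_def inner_add_left norm_e1 norm_e2 orth_e12 orth_e21 complex_eq_iff)

lemma inner_plane_point: "x \<bullet> plane_point z = Re (plane_coord x * cnj z)"
  by (simp add: plane_coord_def plane_point_def inner_add_right)

lemma plane_point_coord_span: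
  assumes "x \<in> span {e1, e2}"
  shows "plane_point (plane_coord x) = x"
proof -
  define K where "K = {x. plane_point (plane_coord x) - x = 0}"
  have "linear (\<lambda>x. plane_point (plane_coord x))"
    using linear_compose[OF linear_plane_coord linear_plane_point] by (simp add: o_def)
  then have "subspace K"
    unfolding K_def by (intro linear_subspace_kernel linear_compose_sub linear_ident)
  moreover have "{e1, e2} \<subseteq> K"
    by (simp add: K_def plane_coord_def plane_point_def norm_e1 norm_e2 orth_e12 orth_e21)
  ultimately have "span {e1, e2} \<subseteq> K"
    by (simp add: span_minimal)
  with assms show ?thesis
    by (auto simp: K_def)
qed

lemma plane_coord_residual [simp]: "plane_coord (x - plane_point (plane_coord x)) = 0"
  using linear_diff[OF linear_plane_coord] by simp

lemma norm_plane_point: "norm (plane_point z) = cmod z"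
proof -
  have "plane_point z \<bullet> plane_point z = (cmod z)\<^sup>2"
    unfolding cmod_power2 by (simp add: inner_plane_point power2_eq_square)
  then show ?thesis
    by (simp add: norm_eq_sqrt_inner)
qed

lemma norm_plane_decomp:
  "(norm x)\<^sup>2 = (norm (x - plane_point (plane_coord x)))\<^sup>2 + (cmod (plane_coord x))\<^sup>2"
proof -
  have "orthogonal (x - plane_point (plane_coord x)) (plane_point (plane_coord x))"
    by (simp add: orthogonal_def inner_plane_point)
  then have "(norm (x - plane_point (plane_coord x) + plane_point (plane_coord x)))\<^sup>2
      = (norm (x - plane_point (plane_coord x)))\<^sup>2 + (norm (plane_point (plane_coord x)))\<^sup>2"
    by (rule norm_add_Pythagorean)
  then show ?thesis
    by (simp add: norm_plane_point)
qed

lemma plane_coord_rotation [simp]: "plane_coord (plane_rotation t x) = cis t * plane_coord x"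
  by (simp add: plane_rotation_def linear_add[OF linear_plane_coord] algebra_simps)

lemma plane_rotation_add: "plane_rotation s (plane_rotation t x) = plane_rotation (s + t) x"
proof -
  have "plane_rotation s (plane_rotation t x)
      = x + plane_point ((cis t - 1) * plane_coord x) + plane_point ((cis s - 1) * (cis t * plane_coord x))"
    by (simp only: plane_rotation_def[of s] plane_coord_rotation) (simp add: plane_rotation_def)
  also have "\<dots> = plane_rotation (s + t) x"
    by (simp add: plane_rotation_def linear_add[OF linear_plane_point, symmetric] cis_mult[symmetric] algebra_simps)
  finally show ?thesis .
qed

lemma plane_rotation_0 [simp]: "plane_rotation 0 x = x"
  by (simp add: plane_rotation_def plane_point_def)

lemma plane_rotation_periodic: "plane_rotation (t + 2 * pi * of_int k) = plane_rotation t"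
  by (simp add: plane_rotation_def fun_eq_iff cis_mult[symmetric])

lemma continuous_on_plane_rotation: "continuous_on UNIV (\<lambda>t. plane_rotation t x)"
  unfolding plane_rotation_def plane_point_def by (intro continuous_intros)

lemma plane_rotation_transitive:
  assumes "norm y = norm x" and "y - x \<in> span {e1, e2}"
  obtains t where "plane_rotation t x = y"
proof -
  have coord_y: "plane_coord y = plane_coord x + plane_coord (y - x)"
    by (simp add: linear_diff[OF linear_plane_coord])
  have "plane_point (plane_coord (y - x)) = y - x"
    using assms(2) by (rule plane_point_coord_span)
  then have residual: "y - plane_point (plane_coord y) = x - plane_point (plane_coord x)"
    by (simp add: coord_y linear_add[OF linear_plane_point] algebra_simps)
  have cmod_eq: "cmod (plane_coord y) = cmod (plane_coord x)"
    using norm_plane_decomp[of x] norm_plane_decomp[of y] assms(1) residual by simp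
  show ?thesis
  proof (cases "plane_coord x = 0")
    case True
    then have "y = x"
      using residual cmod_eq by (simp add: linear_0[OF linear_plane_point])
    with that[of 0] show ?thesis by simp
  next
    case False
    define t where "t = Arg (plane_coord y / plane_coord x)"
    have "cmod (plane_coord y / plane_coord x) = 1"
      using False cmod_eq by (simp add: norm_divide)
    then have "cis t = plane_coord y / plane_coord x"
      by (subst t_def, subst cis_Arg) (auto simp: sgn_eq)
    then have "plane_rotation t x = x + plane_point (plane_coord y - plane_coord x)"
      using False by (simp add: plane_rotation_def algebra_simps)
    also have "\<dots> = y"
      using residual by (simp add: linear_diff[OF linear_plane_point] algebra_simps)
    finally show ?thesis by (rule that)
  qed
qed

lemma line_reflection_plane_point:
  assumes "cmod w = 1"
  shows "line_reflection (plane_point w) x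
    = plane_point (w\<^sup>2 * cnj (plane_coord x)) - (x - plane_point (plane_coord x))"
proof -
  have "complex_of_real (2 * (x \<bullet> plane_point w)) = plane_coord x * cnj w + cnj (plane_coord x) * w"
    by (simp only: inner_plane_point complex_add_cnj[symmetric]) simp
  then have "complex_of_real (2 * (x \<bullet> plane_point w)) * w = plane_coord x * (cnj w * w) + cnj (plane_coord x) * w\<^sup>2"
    by (simp add: power2_eq_square algebra_simps)
  also have "\<dots> = plane_coord x + w\<^sup>2 * cnj (plane_coord x)"
    using assms by (simp add: complex_norm_square[symmetric] mult.commute)
  finally have "(2 * (x \<bullet> plane_point w)) *\<^sub>R plane_point w = plane_point (plane_coord x + w\<^sup>2 * cnj (plane_coord x))"
    by (metis linear_scale[OF linear_plane_point] scaleR_conv_of_real)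
  then show ?thesis
    by (simp add: line_reflection_def linear_add[OF linear_plane_point] algebra_simps)
qed

lemma line_reflection_pair_rotation:
  "line_reflection (plane_point (cis \<theta>)) (line_reflection e1 x) = plane_rotation (2 * \<theta>) x"
proof -
  define z where "z = plane_coord x"
  define y where "y = line_reflection e1 x"
  have "e1 = plane_point 1"
    by (simp add: plane_point_def)
  then have y: "y = plane_point (cnj z) - (x - plane_point z)"
    using line_reflection_plane_point[of 1 x] by (simp add: y_def z_def)
  then have "plane_coord y = cnj z"
    by (simp add: z_def linear_diff[OF linear_plane_coord])
  with y have "line_reflection (plane_point (cis \<theta>)) y = plane_point ((cis \<theta>)\<^sup>2 * z) + (x - plane_point z)"
    by (simp add: line_reflection_plane_point)
  also have "(cis \<theta>)\<^sup>2 = cis (2 * \<theta>)"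
    using Complex.DeMoivre[of \<theta> 2] by simp
  also have "plane_point (cis (2 * \<theta>) * z) + (x - plane_point z) = plane_rotation (2 * \<theta>) x"
    by (simp add: plane_rotation_def z_def left_diff_distrib linear_diff[OF linear_plane_point])
  finally show ?thesis
    by (simp add: y_def)
qed

lemma plane_rotation_closure:
  assumes "closed E" and irrational: "\<phi> / (2 * pi) \<notin> \<rat>"
    and invariant: "\<And>x. x \<in> E \<Longrightarrow> plane_rotation \<phi> x \<in> E" and "x \<in> E"
  shows "plane_rotation t x \<in> E"
proof -
  have multiples: "plane_rotation (of_nat k * \<phi>) x \<in> E" for k
  proof (induction k)
    case (Suc k)
    have "plane_rotation (of_nat (Suc k) * \<phi>) x = plane_rotation \<phi> (plane_rotation (of_nat k * \<phi>) x)"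
      by (simp add: plane_rotation_add algebra_simps)
    then show ?case
      using invariant Suc by simp
  qed (use \<open>x \<in> E\<close> in simp)
  define T where "T = (\<lambda>t. plane_rotation t x) -` E"
  have "closed T"
    unfolding T_def using \<open>closed E\<close> continuous_on_plane_rotation by (rule closed_vimage)
  moreover have "t \<in> closure T"
    unfolding closure_approachable
  proof (intro allI impI)
    fix \<epsilon> :: real
    assume "\<epsilon> > 0"
    then have "\<epsilon> / (2 * pi) > 0"
      by simp
    then obtain h k :: int where "k > 0"
      and close: "\<bar>of_int k * (\<phi> / (2 * pi)) - of_int h - t / (2 * pi)\<bar> < \<epsilon> / (2 * pi)"
      by (rule sequence_of_fractional_parts_is_dense[OF irrational])
    define t' where "t' = of_int k * \<phi> - 2 * pi * of_int h"
    have "t' - t = 2 * pi * (of_int k * (\<phi> / (2 * pi)) - of_int h - t / (2 * pi))"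
      by (simp add: t'_def field_simps)
    then have "dist t' t = 2 * pi * \<bar>of_int k * (\<phi> / (2 * pi)) - of_int h - t / (2 * pi)\<bar>"
      by (simp add: dist_real_def abs_mult)
    also have "\<dots> < 2 * pi * (\<epsilon> / (2 * pi))"
      by (rule mult_strict_left_mono[OF close]) simp
    finally have "dist t' t < \<epsilon>"
      by simp
    moreover have "t' = of_nat (nat k) * \<phi> + 2 * pi * of_int (- h)"
      using \<open>k > 0\<close> by (simp add: t'_def)
    then have "plane_rotation t' x = plane_rotation (of_nat (nat k) * \<phi>) x"
      by (simp only: plane_rotation_periodic)
    then have "t' \<in> T"
      using multiples by (simp add: T_def)
    ultimately show "\<exists>t'\<in>T. dist t' t < \<epsilon>"
      by blast
  qed
  ultimately show ?thesis
    by (simp add: T_def closure_closed)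
qed

lemma sphere_saturated_plane:
  assumes "E \<subseteq> sphere 0 1" and "\<And>t x. x \<in> E \<Longrightarrow> plane_rotation t x \<in> E"
  shows "sphere_saturated E (span {e1, e2})"
  unfolding sphere_saturated_def
proof (intro ballI allI impI)
  fix x y
  assume "x \<in> E" "norm y = 1" "y - x \<in> span {e1, e2}"
  moreover have "norm x = 1"
    using \<open>x \<in> E\<close> assms(1) by auto
  ultimately obtain t where "plane_rotation t x = y"
    using plane_rotation_transitive by metis
  then show "y \<in> E"
    using assms(2) \<open>x \<in> E\<close> by blast
qed

end

lemma sphere_saturated_span_pair:
  fixes a b :: "'a::euclidean_space"
  assumes "norm a = 1" "norm b = 1" and irrational: "arccos (a \<bullet> b) / pi \<notin> \<rat>"
    and "closed E" "E \<subseteq> sphere 0 1"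
    and "line_reflection a ` E \<subseteq> E" "line_reflection b ` E \<subseteq> E"
  shows "sphere_saturated E (span {a, b})"
proof -
  define c where "c = a \<bullet> b"
  define \<theta> where "\<theta> = arccos c"
  have "\<bar>c\<bar> \<le> 1"
    using Cauchy_Schwarz_ineq2[of a b] assms(1,2) by (simp add: c_def)
  moreover have "c \<noteq> 1" "c \<noteq> -1"
    using irrational by (auto simp: c_def)
  ultimately have "-1 < c" "c < 1"
    by auto
  then have cos: "cos \<theta> = c" and sin: "sin \<theta> > 0"
    using arccos_lt_bounded[of c] by (simp_all add: \<theta>_def sin_gt_zero)
  define e2 where "e2 = (1 / sin \<theta>) *\<^sub>R (b - c *\<^sub>R a)"
  have aa: "a \<bullet> a = 1" and bb: "b \<bullet> b = 1"
    using assms(1,2) by (simp_all add: norm_eq_1)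
  have b: "b = c *\<^sub>R a + sin \<theta> *\<^sub>R e2"
    using sin by (simp add: e2_def)
  have "orthonormal_pair a e2"
  proof
    show "a \<bullet> a = 1"
      by (fact aa)
    show "a \<bullet> e2 = 0"
      by (simp add: e2_def inner_diff_right aa c_def)
    have "(b - c *\<^sub>R a) \<bullet> (b - c *\<^sub>R a) = 1 - c\<^sup>2"
      by (simp add: inner_diff_left inner_diff_right aa bb inner_commute c_def power2_eq_square)
    also have "\<dots> = (sin \<theta>)\<^sup>2"
      using cos sin_squared_eq[of \<theta>] by simp
    finally show "e2 \<bullet> e2 = 1"
      using sin by (simp add: e2_def power2_eq_square)
  qed
  then interpret orthonormal_pair a e2 .
  have "b \<in> span {a, e2}"
    unfolding b by (intro span_add span_scale span_base) auto
  moreover have "e2 \<in> span {a, b}"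
    unfolding e2_def by (intro span_diff span_scale span_base) auto
  ultimately have span_ab: "span {a, b} = span {a, e2}"
    by (simp add: span_eq span_base)
  have "\<And>x. x \<in> E \<Longrightarrow> plane_rotation (2 * \<theta>) x \<in> E"
  proof -
    fix x
    assume "x \<in> E"
    have "b = plane_point (cis \<theta>)"
      by (simp add: b plane_point_def cos)
    then have "plane_rotation (2 * \<theta>) x = line_reflection b (line_reflection a x)"
      by (simp add: line_reflection_pair_rotation)
    then show "plane_rotation (2 * \<theta>) x \<in> E"
      using assms(6,7) \<open>x \<in> E\<close> by blast
  qed
  moreover have "2 * \<theta> / (2 * pi) \<notin> \<rat>"
    using irrational by (simp add: \<theta>_def c_def)
  ultimately have "\<And>t x. x \<in> E \<Longrightarrow> plane_rotation t x \<in> E"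
    using plane_rotation_closure[OF \<open>closed E\<close>] by blast
  then show ?thesis
    using sphere_saturated_plane \<open>E \<subseteq> sphere 0 1\<close> span_ab by simp
qed

section \<open>Saturation for a sum of subspaces\<close>

lemma sphere_saturated_maximizer_aligned:
  fixes E L :: "'a::euclidean_space set"
  assumes "subspace L" "sphere_saturated E L" "E \<subseteq> sphere 0 1" "z \<in> E"
    and max: "\<And>w. w \<in> E \<Longrightarrow> w - z \<in> L \<Longrightarrow> w \<bullet> y \<le> z \<bullet> y"
    and "m \<in> L" "y \<bullet> m \<noteq> 0"
  obtains s where "s \<ge> 0" "\<And>w. w \<in> L \<Longrightarrow> (z - s *\<^sub>R y) \<bullet> w = 0"
proof -
  have span_L: "span L = L"
    using \<open>subspace L\<close> by (rule span_eq_iff[THEN iffD2])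
  obtain p q where p: "p \<in> L" and q: "\<And>w. w \<in> L \<Longrightarrow> q \<bullet> w = 0" and z: "z = p + q"
    using orthogonal_subspace_decomp_exists[of L z] span_L unfolding orthogonal_def by metis
  obtain p' q' where p': "p' \<in> L" and q': "\<And>w. w \<in> L \<Longrightarrow> q' \<bullet> w = 0" and y: "y = p' + q'"
    using orthogonal_subspace_decomp_exists[of L y] span_L unfolding orthogonal_def by metis
  have orth: "q \<bullet> p = 0" "q \<bullet> p' = 0" "q' \<bullet> p = 0" "q' \<bullet> p' = 0"
    "p \<bullet> q = 0" "p' \<bullet> q = 0" "p \<bullet> q' = 0" "p' \<bullet> q' = 0"
    using q q' p p' by (auto simp: inner_commute)
  have "y \<bullet> m = p' \<bullet> m"
    using q'[OF \<open>m \<in> L\<close>] by (simp add: y inner_add_left)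
  then have "p' \<noteq> 0"
    using \<open>y \<bullet> m \<noteq> 0\<close> by auto
  define s where "s = norm p / norm p'"
  \<comment> \<open>Turning the L-component of z into the direction of that of y keeps the point on the sphere
    and in the slice z + L, so maximality of z applies to it.\<close>
  define z' where "z' = q + s *\<^sub>R p'"
  have "z' - z = s *\<^sub>R p' - p"
    by (simp add: z'_def z)
  then have "z' - z \<in> L"
    using \<open>subspace L\<close> p p' by (simp add: subspace_diff subspace_scale)
  moreover have "norm z' = norm z"
  proof -
    have "z' \<bullet> z' = q \<bullet> q + s\<^sup>2 * (p' \<bullet> p')"
      by (simp add: z'_def inner_add_left inner_add_right orth power2_eq_square)
    also have "s\<^sup>2 * (p' \<bullet> p') = p \<bullet> p"
      using \<open>p' \<noteq> 0\<close> by (simp add: s_def power_divide power2_norm_eq_inner[symmetric])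
    also have "q \<bullet> q + p \<bullet> p = z \<bullet> z"
      by (simp add: z inner_add_left inner_add_right orth)
    finally show ?thesis
      by (simp add: norm_eq_sqrt_inner)
  qed
  ultimately have "z' \<in> E"
    using assms(2-4) unfolding sphere_saturated_def by auto
  then have "z' \<bullet> y \<le> z \<bullet> y"
    using max \<open>z' - z \<in> L\<close> by blast
  then have "norm p * norm p' \<le> p \<bullet> p'"
    using \<open>p' \<noteq> 0\<close>
    by (simp add: z'_def z y s_def inner_add_left inner_add_right orth inner_commute
        power2_norm_eq_inner[symmetric] power2_eq_square)
  then have "norm p' *\<^sub>R p = norm p *\<^sub>R p'"
    using norm_cauchy_schwarz[of p p'] norm_cauchy_schwarz_eq[of p' p] by (simp add: inner_commute)
  then have "p = s *\<^sub>R p'"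
    using \<open>p' \<noteq> 0\<close> by (simp add: s_def scaleR_left_imp_eq[of "norm p'"] divide_inverse_commute)
  show ?thesis
  proof
    show "s \<ge> 0"
      by (simp add: s_def)
    show "(z - s *\<^sub>R y) \<bullet> w = 0" if "w \<in> L" for w
      using q[OF that] q'[OF that] \<open>p = s *\<^sub>R p'\<close> by (simp add: z y inner_diff_left inner_add_left)
  qed
qed

lemma sphere_saturated_span_Un_nonorthogonal:
  fixes E L1 L2 :: "'a::euclidean_space set"
  assumes "subspace L1" "subspace L2" "m \<in> L1" "m \<in> L2"
    and "sphere_saturated E L1" "sphere_saturated E L2" "closed E" "E \<subseteq> sphere 0 1"
    and "x \<in> E" "norm y = 1" "y - x \<in> span (L1 \<union> L2)" "y \<bullet> m \<noteq> 0"
  shows "y \<in> E"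
proof -
  define L where "L = span (L1 \<union> L2)"
  define K where "K = E \<inter> (\<lambda>w. w - x) -` L"
  have "closed ((\<lambda>w. w - x) -` L)"
    by (rule closed_vimage) (auto simp: L_def closed_subspace intro!: continuous_intros)
  then have "compact K"
    unfolding K_def compact_eq_bounded_closed
    using \<open>closed E\<close> bounded_subset[OF bounded_sphere \<open>E \<subseteq> sphere 0 1\<close>] by (auto intro: bounded_Int)
  moreover have "x \<in> K"
    by (simp add: K_def L_def span_zero \<open>x \<in> E\<close>)
  ultimately have "\<exists>z\<in>K. \<forall>w\<in>K. w \<bullet> y \<le> z \<bullet> y"
    by (intro continuous_attains_sup continuous_intros) auto
  then obtain z where "z \<in> K" and z_max: "\<And>w. w \<in> K \<Longrightarrow> w \<bullet> y \<le> z \<bullet> y"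
    by blast
  have "z \<in> E" "z - x \<in> L"
    using \<open>z \<in> K\<close> by (auto simp: K_def)
  have max_in: "w \<bullet> y \<le> z \<bullet> y" if "Li \<subseteq> L" "w \<in> E" "w - z \<in> Li" for w Li
  proof -
    have "w - x = (w - z) + (z - x)"
      by simp
    then have "w - x \<in> L"
      using that \<open>z - x \<in> L\<close> by (metis L_def subsetD span_add)
    then show ?thesis
      using z_max \<open>w \<in> E\<close> by (simp add: K_def)
  qed
  have "L1 \<subseteq> L" "L2 \<subseteq> L"
    by (auto simp: L_def span_base)
  obtain s1 where "s1 \<ge> 0" and s1: "\<And>w. w \<in> L1 \<Longrightarrow> (z - s1 *\<^sub>R y) \<bullet> w = 0"
    using sphere_saturated_maximizer_aligned[OF \<open>subspace L1\<close> assms(5,8) \<open>z \<in> E\<close>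
        max_in[OF \<open>L1 \<subseteq> L\<close>] assms(3,12)] by blast
  obtain s2 where s2: "\<And>w. w \<in> L2 \<Longrightarrow> (z - s2 *\<^sub>R y) \<bullet> w = 0"
    using sphere_saturated_maximizer_aligned[OF \<open>subspace L2\<close> assms(6,8) \<open>z \<in> E\<close>
        max_in[OF \<open>L2 \<subseteq> L\<close>] assms(4,12)] by blast
  have "s1 = s2"
    using s1[OF \<open>m \<in> L1\<close>] s2[OF \<open>m \<in> L2\<close>] \<open>y \<bullet> m \<noteq> 0\<close> by (simp add: inner_diff_left)
  have orth: "(z - s1 *\<^sub>R y) \<bullet> w = 0" if "w \<in> L" for w
    using orthogonal_to_span[of w "L1 \<union> L2"] that s1 s2 \<open>s1 = s2\<close>
    unfolding L_def orthogonal_def by auto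
  define d where "d = z - y"
  have "d \<in> L"
    using \<open>z - x \<in> L\<close> \<open>y - x \<in> span (L1 \<union> L2)\<close> span_diff[of "z - x" "L1 \<union> L2" "y - x"]
    by (simp add: d_def L_def)
  then have eq1: "d \<bullet> d + (1 - s1) * (y \<bullet> d) = 0"
    using orth[of d] by (simp add: d_def inner_diff_left inner_diff_right algebra_simps)
  have eq2: "2 * (y \<bullet> d) + d \<bullet> d = 0"
    using \<open>z \<in> E\<close> \<open>E \<subseteq> sphere 0 1\<close> \<open>norm y = 1\<close>
    by (auto simp: d_def norm_eq_1 inner_diff_left inner_diff_right inner_commute)
  have "(1 + s1) * (d \<bullet> d) = 2 * (d \<bullet> d + (1 - s1) * (y \<bullet> d)) - (1 - s1) * (2 * (y \<bullet> d) + d \<bullet> d)"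
    by (simp add: algebra_simps)
  then have "(1 + s1) * (d \<bullet> d) = 0"
    by (simp only: eq1 eq2)
  then have "z = y"
    using \<open>s1 \<ge> 0\<close> by (simp add: d_def)
  then show ?thesis
    using \<open>z \<in> E\<close> by simp
qed

lemma sphere_saturated_span_Un:
  fixes E L1 L2 :: "'a::euclidean_space set"
  assumes "subspace L1" "subspace L2" "m \<in> L1" "m \<in> L2" "m \<noteq> 0"
    and "sphere_saturated E L1" "sphere_saturated E L2" "closed E" "E \<subseteq> sphere 0 1"
  shows "sphere_saturated E (span (L1 \<union> L2))"
  unfolding sphere_saturated_def
proof (intro ballI allI impI)
  fix x y
  assume "x \<in> E" "norm y = 1" "y - x \<in> span (L1 \<union> L2)"
  note nonorthogonal = sphere_saturated_span_Un_nonorthogonal[OF assms(1-4,6-9) \<open>x \<in> E\<close>]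
  define L where "L = span (L1 \<union> L2)"
  have "m \<in> L"
    using \<open>m \<in> L1\<close> by (simp add: L_def span_base)
  obtain a b where "a \<in> L" and b: "\<And>w. w \<in> L \<Longrightarrow> b \<bullet> w = 0" and y: "y = a + b"
    using orthogonal_subspace_decomp_exists[of "L1 \<union> L2" y] unfolding orthogonal_def L_def by metis
  show "y \<in> E"
  proof (cases "y \<bullet> m = 0")
    case False
    then show ?thesis
      using nonorthogonal \<open>norm y = 1\<close> \<open>y - x \<in> span (L1 \<union> L2)\<close> by blast
  next
    case True
    have "a \<bullet> m = 0" "b \<bullet> a = 0" "b \<bullet> m = 0"
      using True b[OF \<open>a \<in> L\<close>] b[OF \<open>m \<in> L\<close>] by (auto simp: y inner_add_left)
    show ?thesis
    proof (cases "a = 0")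
      case True
      then have "y \<bullet> (y - x) = 0"
        using b \<open>y - x \<in> span (L1 \<union> L2)\<close> by (simp add: y L_def)
      moreover have "x \<bullet> x = 1" "y \<bullet> y = 1"
        using \<open>x \<in> E\<close> \<open>E \<subseteq> sphere 0 1\<close> \<open>norm y = 1\<close> by (auto simp: norm_eq_1)
      ultimately have "(y - x) \<bullet> (y - x) = 0"
        by (simp add: inner_diff_left inner_diff_right inner_commute)
      then show ?thesis
        using \<open>x \<in> E\<close> by simp
    next
      case False
      \<comment> \<open>Approximate y along the great circle through y in the direction of m.\<close>
      define n where "n = (norm a / norm m) *\<^sub>R m"
      define f where "f t = b + cos t *\<^sub>R a + sin t *\<^sub>R n" for t
      have "(f \<longlongrightarrow> f 0) (at_right 0)"
        unfolding f_def by (intro tendsto_intros)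
      moreover have "f 0 = y"
        by (simp add: f_def y)
      moreover have "\<forall>\<^sub>F t in at_right 0. f t \<in> E"
        unfolding eventually_at_right_field
      proof (intro exI[of _ pi] conjI allI impI)
        fix t :: real
        assume "0 < t" "t < pi"
        have "norm n = norm a"
          using \<open>m \<noteq> 0\<close> by (simp add: n_def)
        then have "n \<bullet> n = a \<bullet> a"
          by (metis power2_norm_eq_inner)
        moreover have "a \<bullet> n = 0" "b \<bullet> n = 0"
          using \<open>a \<bullet> m = 0\<close> \<open>b \<bullet> m = 0\<close> by (simp_all add: n_def)
        ultimately have "f t \<bullet> f t = b \<bullet> b + (cos t)\<^sup>2 * (a \<bullet> a) + (sin t)\<^sup>2 * (a \<bullet> a)"
          using \<open>b \<bullet> a = 0\<close>
          by (simp add: f_def inner_add_left inner_add_right inner_commute power2_eq_square algebra_simps)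
        also have "\<dots> = b \<bullet> b + a \<bullet> a"
          by (simp add: distrib_right[symmetric])
        also have "\<dots> = y \<bullet> y"
          using \<open>b \<bullet> a = 0\<close> by (simp add: y inner_add_left inner_add_right inner_commute)
        finally have "norm (f t) = 1"
          using \<open>norm y = 1\<close> by (simp add: norm_eq_1)
        moreover have "f t - x \<in> span (L1 \<union> L2)"
        proof -
          have "f t - x = (y - x) + ((cos t - 1) *\<^sub>R a + sin t *\<^sub>R n)"
            by (simp add: f_def y algebra_simps)
          moreover have "(cos t - 1) *\<^sub>R a + sin t *\<^sub>R n \<in> L"
            using \<open>a \<in> L\<close> \<open>m \<in> L\<close> by (simp add: L_def n_def span_add span_scale)
          ultimately show ?thesis
            using \<open>y - x \<in> span (L1 \<union> L2)\<close> by (metis L_def span_add)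
        qed
        moreover have "f t \<bullet> m \<noteq> 0"
          using \<open>0 < t\<close> \<open>t < pi\<close> \<open>m \<noteq> 0\<close> False sin_gt_zero[of t]
          by (simp add: f_def n_def inner_add_left \<open>a \<bullet> m = 0\<close> \<open>b \<bullet> m = 0\<close>)
        ultimately show "f t \<in> E"
          using nonorthogonal by blast
      qed simp
      ultimately show ?thesis
        using Lim_in_closed_set[OF \<open>closed E\<close>] by (metis trivial_limit_at_right_real)
    qed
  qed
qed

section \<open>Spreading saturation along non-orthogonal lines\<close>

lemma subspace_orthogonal_vector_exists:
  fixes L :: "'a::euclidean_space set"
  assumes "subspace L" "2 \<le> dim L"
  obtains m where "m \<in> L" "m \<noteq> 0" "m \<bullet> w = 0"
proof (cases "w = 0")
  case True
  have "\<not> L \<subseteq> {0}"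
    using assms(2) dim_eq_0[of L] by linarith
  then obtain m where "m \<in> L" "m \<noteq> 0"
    by blast
  with True that show ?thesis
    by simp
next
  case False
  define T where "T = {x. w \<bullet> x = 0}"
  have "dim {x + y |x y. x \<in> L \<and> y \<in> T} + dim (L \<inter> T) = dim L + dim T"
    using dim_sums_Int[OF assms(1) subspace_hyperplane[of w]] by (simp add: T_def)
  moreover have "dim T = DIM('a) - 1" "dim {x + y |x y. x \<in> L \<and> y \<in> T} \<le> DIM('a)"
    using dim_hyperplane[OF False] dim_subset_UNIV by (auto simp: T_def)
  ultimately have "dim (L \<inter> T) \<noteq> 0"
    using assms(2) by linarith
  then show ?thesis
    using that by (auto simp: T_def inner_commute)
qed

lemma sphere_saturated_span_insert:
  fixes E L :: "'a::euclidean_space set"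
  assumes "subspace L" "2 \<le> dim L" "sphere_saturated E L" "closed E" "E \<subseteq> sphere 0 1"
    and "norm w = 1" "line_reflection w ` E = E" "a \<in> L" "a \<bullet> w \<noteq> 0"
  shows "sphere_saturated E (span (insert w L))"
proof -
  obtain m where "m \<in> L" "m \<noteq> 0" "m \<bullet> w = 0"
    using subspace_orthogonal_vector_exists[OF assms(1,2)] .
  define L' where "L' = line_reflection w ` L"
  have "subspace L'"
    unfolding L'_def using assms(1) orthogonal_transformation_line_reflection[OF assms(6)]
    by (simp add: linear_subspace_image orthogonal_transformation_linear)
  have "sphere_saturated E L'"
    unfolding L'_def
    using orthogonal_transformation_line_reflection[OF assms(6)] assms(7,3) by (rule sphere_saturated_image)
  have "m = line_reflection w (- m)"
    using \<open>m \<bullet> w = 0\<close> by (simp add: line_reflection_def)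
  then have "m \<in> L'"
    using \<open>m \<in> L\<close> assms(1) unfolding L'_def by (metis image_eqI subspace_neg)
  have "sphere_saturated E (span (L \<union> L'))"
    using sphere_saturated_span_Un \<open>subspace L'\<close> \<open>sphere_saturated E L'\<close> \<open>m \<in> L\<close> \<open>m \<in> L'\<close> \<open>m \<noteq> 0\<close> assms
    by blast
  moreover have "span (insert w L) \<subseteq> span (L \<union> L')"
  proof -
    have "line_reflection w a + a \<in> span (L \<union> L')"
      using assms(8) by (simp add: L'_def span_add span_base)
    moreover have "w = (1 / (2 * (a \<bullet> w))) *\<^sub>R (line_reflection w a + a)"
      using assms(9) by (simp add: line_reflection_def)
    ultimately have "w \<in> span (L \<union> L')"
      by (metis span_scale)
    then show ?thesis
      by (intro span_minimal subspace_span) (auto intro: span_base)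
  qed
  ultimately show ?thesis
    by (rule sphere_saturated_mono)
qed

lemma sphere_saturated_span_connected:
  fixes u :: "'i \<Rightarrow> 'a::euclidean_space"
  assumes "finite I"
    and connected: "\<And>A. A \<subseteq> I \<Longrightarrow> A \<noteq> {} \<Longrightarrow> A \<noteq> I \<Longrightarrow> \<exists>a\<in>A. \<exists>k\<in>I - A. u a \<bullet> u k \<noteq> 0"
    and unit: "\<And>k. k \<in> I \<Longrightarrow> norm (u k) = 1"
    and reflect: "\<And>k. k \<in> I \<Longrightarrow> line_reflection (u k) ` E = E"
    and "closed E" "E \<subseteq> sphere 0 1"
    and "A \<subseteq> I" "2 \<le> dim (u ` A)" "sphere_saturated E (span (u ` A))"
  shows "sphere_saturated E (span (u ` I))"
  using assms(7-9)
proof (induction "card (I - A)" arbitrary: A rule: less_induct)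
  case less
  show ?case
  proof (cases "A = I")
    case True
    with less.prems show ?thesis
      by simp
  next
    case False
    have "A \<noteq> {}"
      using less.prems(2) by auto
    then obtain a k where "a \<in> A" "k \<in> I - A" "u a \<bullet> u k \<noteq> 0"
      using connected less.prems(1) False by blast
    have "sphere_saturated E (span (insert (u k) (span (u ` A))))"
      by (rule sphere_saturated_span_insert)
        (use less.prems unit reflect assms(5,6) \<open>k \<in> I - A\<close> \<open>a \<in> A\<close> \<open>u a \<bullet> u k \<noteq> 0\<close> in
          \<open>auto simp: span_base\<close>)
    moreover have "span (u ` insert k A) \<subseteq> span (insert (u k) (span (u ` A)))"
      by (intro span_mono) (auto simp: span_base)
    ultimately have "sphere_saturated E (span (u ` insert k A))"
      by (rule sphere_saturated_mono)
    moreover have "card (I - insert k A) < card (I - A)"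
      using \<open>k \<in> I - A\<close> assms(1) by (metis Diff_insert card_Diff1_less finite_Diff)
    moreover have "2 \<le> dim (u ` insert k A)"
      using less.prems(2) dim_subset[of "u ` A" "u ` insert k A"] by (simp add: subset_insertI)
    ultimately show ?thesis
      using less.hyps less.prems(1) \<open>k \<in> I - A\<close> by blast
  qed
qed

theorem closed_reflection_invariant_eq_sphere:
  fixes u :: "'i \<Rightarrow> 'a::euclidean_space"
  assumes "finite I" "i \<in> I" "j \<in> I" and irrational: "arccos (u i \<bullet> u j) / pi \<notin> \<rat>"
    and connected: "\<And>A. A \<subseteq> I \<Longrightarrow> A \<noteq> {} \<Longrightarrow> A \<noteq> I \<Longrightarrow> \<exists>a\<in>A. \<exists>k\<in>I - A. u a \<bullet> u k \<noteq> 0"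
    and spanning: "span (u ` I) = UNIV"
    and unit: "\<And>k. k \<in> I \<Longrightarrow> norm (u k) = 1"
    and reflect: "\<And>k. k \<in> I \<Longrightarrow> line_reflection (u k) ` E = E"
    and "closed E" "E \<subseteq> sphere 0 1" "E \<noteq> {}"
  shows "E = sphere 0 1"
proof -
  have "\<bar>u i \<bullet> u j\<bar> \<noteq> 1"
    using irrational by (cases "u i \<bullet> u j \<ge> 0") auto
  then have "2 \<le> dim (u ` {i, j})"
    using dim_unit_pair[of "u i" "u j"] unit assms(2,3) by simp
  moreover have "sphere_saturated E (span (u ` {i, j}))"
    using sphere_saturated_span_pair[of "u i" "u j"] irrational unit reflect assms(2,3,9,10) by simp
  ultimately have "sphere_saturated E (span (u ` I))"
    using sphere_saturated_span_connected[OF assms(1) connected unit reflect assms(9,10), of "{i, j}"]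
      assms(2,3) by simp
  then show ?thesis
    using sphere_saturated_UNIV spanning assms(10,11) by simp
qed

lemma nonorthogonal_pair_of_indecomposable:
  assumes lines: "\<And>j. j \<in> I \<Longrightarrow> H j = span {u j}"
    and indecomposable: "\<not> (\<exists>A B. A \<noteq> {} \<and> B \<noteq> {} \<and> A \<inter> B = {} \<and> A \<union> B = I \<and>
      (\<forall>i\<in>A. \<forall>j\<in>B. \<forall>x\<in>H i. \<forall>y\<in>H j. orthogonal x y))"
    and "A \<subseteq> I" "A \<noteq> {}" "A \<noteq> I"
  shows "\<exists>a\<in>A. \<exists>k\<in>I - A. u a \<bullet> u k \<noteq> 0"
proof (rule ccontr)
  assume no_pair: "\<not> ?thesis"
  have "\<forall>a\<in>A. \<forall>k\<in>I - A. \<forall>x\<in>H a. \<forall>y\<in>H k. orthogonal x y"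
  proof (intro ballI)
    fix a k x y
    assume "a \<in> A" "k \<in> I - A" "x \<in> H a" "y \<in> H k"
    then have "x \<in> span {u a}" "y \<in> span {u k}" "orthogonal (u a) (u k)"
      using no_pair \<open>A \<subseteq> I\<close> lines by (auto simp: orthogonal_def)
    then show "orthogonal x y"
      using orthogonal_span_singletons by blast
  qed
  moreover have "I - A \<noteq> {}" "A \<inter> (I - A) = {}" "A \<union> (I - A) = I"
    using assms(3-5) by auto
  ultimately show False
    using indecomposable[unfolded not_ex, rule_format, of A "I - A"] \<open>A \<noteq> {}\<close> by blast
qed

lemma span_eq_UNIV_of_sum_lines:
  assumes sums: "{\<Sum>j\<in>I. x j | x. \<forall>j\<in>I. x j \<in> H j} = UNIV"
    and lines: "\<And>j. j \<in> I \<Longrightarrow> H j = span {u j}"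
  shows "span (u ` I) = UNIV"
proof -
  have "z \<in> span (u ` I)" for z
  proof -
    have "z \<in> {\<Sum>j\<in>I. x j | x. \<forall>j\<in>I. x j \<in> H j}"
      by (simp add: sums)
    then obtain x where "z = (\<Sum>j\<in>I. x j)" and x: "\<forall>j\<in>I. x j \<in> H j"
      by blast
    moreover have "x j \<in> span (u ` I)" if "j \<in> I" for j
      using x that lines span_mono[of "{u j}" "u ` I"] by auto
    ultimately show ?thesis
      by (simp add: span_sum)
  qed
  then show ?thesis
    by auto
qed

theorem theorem3p2:
  fixes H :: "nat \<Rightarrow> (real ^ 'n) set"
    and E :: "(real ^ 'n) set"
  assumes n2: "CARD('n) \<ge> 2"
    and lines: "\<And>j. j \<in> {1..CARD('n)} \<Longrightarrow> subspace (H j) \<and> dim (H j) = 1"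
    and irr: "\<exists>i\<in>{1..CARD('n)}. \<exists>j\<in>{1..CARD('n)}. \<exists>u v. u \<in> H i \<and> v \<in> H j \<and>
               u \<noteq> 0 \<and> v \<noteq> 0 \<and> line_angle u v / pi \<notin> \<rat>"
    and sum_all: "{\<Sum>j\<in>{1..CARD('n)}. x j | x. \<forall>j\<in>{1..CARD('n)}. x j \<in> H j} = UNIV"
    and indec: "\<not> (\<exists>A B. A \<noteq> {} \<and> B \<noteq> {} \<and> A \<inter> B = {} \<and> A \<union> B = {1..CARD('n)} \<and>
               (\<forall>i\<in>A. \<forall>j\<in>B. \<forall>x\<in>H i. \<forall>y\<in>H j. orthogonal x y))"
    and E_sub: "E \<subseteq> sphere 0 1"
    and E_ne: "E \<noteq> {}"
    and E_closed: "closed E"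
    and E_inv: "\<And>j. j \<in> {1..CARD('n)} \<Longrightarrow> reflection (H j) ` E = E"
  shows "E = sphere 0 1"
proof -
  define I where "I = {1..CARD('n)}"
  have "\<forall>j\<in>I. \<exists>v. norm v = 1 \<and> H j = span {v}"
    using lines subspace_dim_1_eq_span_unit unfolding I_def by metis
  then obtain u where unit: "\<And>j. j \<in> I \<Longrightarrow> norm (u j) = 1" and H: "\<And>j. j \<in> I \<Longrightarrow> H j = span {u j}"
    by metis
  obtain i j x y where "i \<in> I" "j \<in> I" "x \<in> H i" "y \<in> H j" "x \<noteq> 0" "y \<noteq> 0"
    and "line_angle x y / pi \<notin> \<rat>"
    using irr unfolding I_def by blast
  then have "arccos (u i \<bullet> u j) / pi \<notin> \<rat>"
    using irrational_arccos_inner_of_line_angle[of "u i" "u j" x y] unit H by simp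
  moreover have "line_reflection (u k) ` E = E" if "k \<in> I" for k
    using E_inv[of k] that by (simp add: I_def H unit reflection_span_singleton)
  ultimately show ?thesis
    using closed_reflection_invariant_eq_sphere[of I i j u E] \<open>i \<in> I\<close> \<open>j \<in> I\<close> unit E_closed E_sub E_ne
      nonorthogonal_pair_of_indecomposable[OF H indec[folded I_def]]
      span_eq_UNIV_of_sum_lines[OF sum_all[folded I_def] H]
    by (simp add: I_def)
qed

end
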